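(* For any graph $G$ with no isolated vertex, order $n$ and maximum degree $\Delta$, $$\left\lceil\frac{2n}{\Delta}\right\rceil\le\gamma_{(2,2,2)}(G)\le 2\gamma_t(G).$$ Furthermore, if $G$ has minimum degree $\delta\ge2$, then $\gamma_{(2,2,2)}(G)\le\gamma_{\times2,t}(G)$.
   Context: All graphs are finite and simple; $N(v)$ is the open neighbourhood. $\gamma_{(2,2,2)}(G)$ is the minimum of $\sum_v f(v)$ over functions $f:V(G)\to\{0,1,2\}$ with $\sum_{u\in N(v)}f(u)\ge2$ for every vertex $v$. $\gamma_t(G)$ is the total domination number (minimum size of $S$ such that every vertex has a neighbour in $S$). $\gamma_{\times2,t}(G)$ (double total domination number) is the minimum size of $S\subseteq V(G)$ such that every vertex has at least two neighbours in $S$. *)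

theory Defs
  imports Complex_Main
begin

definition simple_graph :: "'a set \<Rightarrow> ('a \<Rightarrow> 'a \<Rightarrow> bool) \<Rightarrow> bool" where
  "simple_graph V E \<longleftrightarrow> finite V \<and> (\<forall>u v. E u v \<longrightarrow> u \<in> V \<and> v \<in> V)
     \<and> (\<forall>u v. E u v \<longrightarrow> E v u) \<and> (\<forall>v. \<not> E v v)"

definition nbhd :: "'a set \<Rightarrow> ('a \<Rightarrow> 'a \<Rightarrow> bool) \<Rightarrow> 'a \<Rightarrow> 'a set" where
  "nbhd V E v = {u \<in> V. E v u}"

definition degree :: "'a set \<Rightarrow> ('a \<Rightarrow> 'a \<Rightarrow> bool) \<Rightarrow> 'a \<Rightarrow> nat" where
  "degree V E v = card (nbhd V E v)"

definition max_degree :: "'a set \<Rightarrow> ('a \<Rightarrow> 'a \<Rightarrow> bool) \<Rightarrow> nat" where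
  "max_degree V E = Max (degree V E ` V)"

definition min_degree :: "'a set \<Rightarrow> ('a \<Rightarrow> 'a \<Rightarrow> bool) \<Rightarrow> nat" where
  "min_degree V E = Min (degree V E ` V)"

definition no_isolated :: "'a set \<Rightarrow> ('a \<Rightarrow> 'a \<Rightarrow> bool) \<Rightarrow> bool" where
  "no_isolated V E \<longleftrightarrow> (\<forall>v \<in> V. nbhd V E v \<noteq> {})"

definition is_222_function :: "'a set \<Rightarrow> ('a \<Rightarrow> 'a \<Rightarrow> bool) \<Rightarrow> ('a \<Rightarrow> nat) \<Rightarrow> bool" where
  "is_222_function V E f \<longleftrightarrow> (\<forall>v. v \<notin> V \<longrightarrow> f v = 0) \<and> (\<forall>v \<in> V. f v \<le> 2)
     \<and> (\<forall>v \<in> V. (\<Sum>u \<in> nbhd V E v. f u) \<ge> 2)"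

definition gamma_222 :: "'a set \<Rightarrow> ('a \<Rightarrow> 'a \<Rightarrow> bool) \<Rightarrow> nat" where
  "gamma_222 V E = Min {(\<Sum>v \<in> V. f v) | f. is_222_function V E f}"

definition is_total_dom_set :: "'a set \<Rightarrow> ('a \<Rightarrow> 'a \<Rightarrow> bool) \<Rightarrow> 'a set \<Rightarrow> bool" where
  "is_total_dom_set V E S \<longleftrightarrow> S \<subseteq> V \<and> (\<forall>v \<in> V. nbhd V E v \<inter> S \<noteq> {})"

definition gamma_t :: "'a set \<Rightarrow> ('a \<Rightarrow> 'a \<Rightarrow> bool) \<Rightarrow> nat" where
  "gamma_t V E = Min {card S | S. is_total_dom_set V E S}"

definition is_double_total_dom_set :: "'a set \<Rightarrow> ('a \<Rightarrow> 'a \<Rightarrow> bool) \<Rightarrow> 'a set \<Rightarrow> bool" where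
  "is_double_total_dom_set V E S \<longleftrightarrow> S \<subseteq> V \<and> (\<forall>v \<in> V. card (nbhd V E v \<inter> S) \<ge> 2)"

definition gamma_x2t :: "'a set \<Rightarrow> ('a \<Rightarrow> 'a \<Rightarrow> bool) \<Rightarrow> nat" where
  "gamma_x2t V E = Min {card S | S. is_double_total_dom_set V E S}"

end

theory Submission
  imports Defs
begin

text \<open>If f is a (2,2,2)-function of weight w, summing the weights of all neighbourhoods
  counts each f(u) deg(u) times, so 2n \<le> \<Sum>(u \<in> V) f(u) deg(u) \<le> w \<Delta>.
  Conversely, the value 2 on a total dominating set S, and the value 1 on a double total
  dominating set S, are (2,2,2)-functions of weight 2|S| and |S| respectively.\<close>

lemma finite_Collect_bounded_nat:
  fixes g :: "'b \<Rightarrow> nat"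
  assumes "\<And>x. P x \<Longrightarrow> g x \<le> B"
  shows "finite {g x | x. P x}"
  using assms by (intro finite_subset[of _ "{..B}", OF _ finite_atMost]) auto

lemma Min_Collect_nat_attained:
  fixes g :: "'b \<Rightarrow> nat"
  assumes "P x" and "\<And>x. P x \<Longrightarrow> g x \<le> B"
  shows "\<exists>y. P y \<and> Min {g x | x. P x} = g y"
proof -
  have "Min {g x | x. P x} \<in> {g x | x. P x}"
    using assms by (intro Min_in finite_Collect_bounded_nat) auto
  then show ?thesis by auto
qed

lemma Min_Collect_nat_le:
  fixes g :: "'b \<Rightarrow> nat"
  assumes "P y" and "\<And>x. P x \<Longrightarrow> g x \<le> B"
  shows "Min {g x | x. P x} \<le> g y"
  using assms by (intro Min_le finite_Collect_bounded_nat) auto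

lemma ceiling_divide_le_nat:
  fixes m g d :: nat
  assumes "m \<le> g * d" and "0 < d"
  shows "\<lceil>real m / real d\<rceil> \<le> int g"
proof -
  have "real m \<le> real g * real d" using assms(1) by (metis of_nat_le_iff of_nat_mult)
  then have "real m / real d \<le> real g" using assms(2) by (simp add: pos_divide_le_eq)
  then show ?thesis by (simp add: ceiling_le_iff)
qed

lemma sum_indicator_weight:
  fixes c :: nat
  assumes "finite A"
  shows "(\<Sum>x\<in>A. if x \<in> S then c else 0) = c * card (A \<inter> S)"
  using assms by (simp add: sum.If_cases Int_def)

lemma finite_nbhd: "finite V \<Longrightarrow> finite (nbhd V E v)"
  unfolding nbhd_def by simp

lemma sum_sum_nbhd_eq_sum_degree:
  fixes f :: "'a \<Rightarrow> nat"
  assumes "finite V" and sym: "\<And>u v. E u v \<Longrightarrow> E v u"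
  shows "(\<Sum>v\<in>V. \<Sum>u\<in>nbhd V E v. f u) = (\<Sum>u\<in>V. f u * degree V E u)"
proof -
  have "(\<Sum>v\<in>V. \<Sum>u\<in>nbhd V E v. f u) = (\<Sum>v\<in>V. \<Sum>u\<in>V. if E v u then f u else 0)"
    unfolding nbhd_def using assms(1) by (intro sum.cong refl sum.inter_filter)
  also have "\<dots> = (\<Sum>u\<in>V. \<Sum>v\<in>V. if E v u then f u else 0)"
    by (rule sum.swap)
  also have "\<dots> = (\<Sum>u\<in>V. f u * card {v\<in>V. E v u})"
    using assms(1) by (simp add: sum.If_cases Int_def conj_commute mult.commute)
  also have "\<dots> = (\<Sum>u\<in>V. f u * degree V E u)"
  proof -
    have "{v\<in>V. E v u} = nbhd V E u" for u unfolding nbhd_def using sym by blast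
    then show ?thesis unfolding degree_def by simp
  qed
  finally show ?thesis .
qed

lemma card_le_weight_max_degree:
  assumes "simple_graph V E" and f: "is_222_function V E f"
  shows "2 * card V \<le> (\<Sum>v\<in>V. f v) * max_degree V E"
proof -
  have fin: "finite V" and sym: "\<And>u v. E u v \<Longrightarrow> E v u"
    using assms(1) unfolding simple_graph_def by auto
  have "2 * card V = (\<Sum>v\<in>V. 2::nat)" by simp
  also have "\<dots> \<le> (\<Sum>v\<in>V. \<Sum>u\<in>nbhd V E v. f u)"
    using f unfolding is_222_function_def by (intro sum_mono) auto
  also have "\<dots> = (\<Sum>u\<in>V. f u * degree V E u)"
    using fin sym by (rule sum_sum_nbhd_eq_sum_degree)
  also have "\<dots> \<le> (\<Sum>u\<in>V. f u * max_degree V E)"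
    using fin unfolding max_degree_def by (intro sum_mono mult_le_mono2) simp
  also have "\<dots> = (\<Sum>v\<in>V. f v) * max_degree V E"
    by (rule sum_distrib_right[symmetric])
  finally show ?thesis .
qed

lemma max_degree_pos:
  assumes "finite V" and "V \<noteq> {}" and "no_isolated V E"
  shows "0 < max_degree V E"
proof -
  obtain v where v: "v \<in> V" using assms(2) by blast
  then have "0 < degree V E v"
    using assms(3) finite_nbhd[OF assms(1)]
    unfolding no_isolated_def degree_def by (simp add: card_gt_0_iff)
  also have "degree V E v \<le> max_degree V E"
    unfolding max_degree_def using assms(1) v by simp
  finally show ?thesis .
qed

lemma is_222_function_indicator:
  fixes c :: nat
  assumes "finite V" and "S \<subseteq> V" and "c \<le> 2"
    and "\<And>v. v \<in> V \<Longrightarrow> 2 \<le> c * card (nbhd V E v \<inter> S)"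
  shows "is_222_function V E (\<lambda>v. if v \<in> S then c else 0)"
  using assms finite_nbhd[OF assms(1)]
  unfolding is_222_function_def by (auto simp: sum_indicator_weight)

lemma weight_222_function_le:
  assumes "is_222_function V E f"
  shows "(\<Sum>v\<in>V. f v) \<le> 2 * card V"
  using assms sum_mono[of V f "\<lambda>_. 2"] unfolding is_222_function_def by auto

lemma gamma_222_le_weight:
  "is_222_function V E f \<Longrightarrow> gamma_222 V E \<le> (\<Sum>v\<in>V. f v)"
  unfolding gamma_222_def by (rule Min_Collect_nat_le[OF _ weight_222_function_le])

lemma gamma_222_attained:
  "is_222_function V E f \<Longrightarrow> \<exists>g. is_222_function V E g \<and> gamma_222 V E = (\<Sum>v\<in>V. g v)"
  unfolding gamma_222_def by (rule Min_Collect_nat_attained[OF _ weight_222_function_le])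

lemma gamma_222_le_indicator_weight:
  fixes c :: nat
  assumes "finite V" and "S \<subseteq> V" and "is_222_function V E (\<lambda>v. if v \<in> S then c else 0)"
  shows "gamma_222 V E \<le> c * card S"
proof -
  have "gamma_222 V E \<le> (\<Sum>v\<in>V. if v \<in> S then c else 0)"
    using assms(3) by (rule gamma_222_le_weight)
  also have "\<dots> = c * card S"
    using assms(1,2) by (simp add: sum_indicator_weight Int_absorb1)
  finally show ?thesis .
qed

lemma is_222_function_total_dom_set:
  assumes "finite V" and "is_total_dom_set V E S"
  shows "is_222_function V E (\<lambda>v. if v \<in> S then 2 else 0)"
proof (rule is_222_function_indicator)
  show "2 \<le> 2 * card (nbhd V E v \<inter> S)" if "v \<in> V" for v
    using assms that finite_nbhd[OF assms(1)]
    unfolding is_total_dom_set_def by (simp add: Suc_le_eq card_gt_0_iff)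
qed (use assms in \<open>auto simp: is_total_dom_set_def\<close>)

lemma is_222_function_double_total_dom_set:
  assumes "finite V" and "is_double_total_dom_set V E S"
  shows "is_222_function V E (\<lambda>v. if v \<in> S then 1 else 0)"
  using assms by (intro is_222_function_indicator) (auto simp: is_double_total_dom_set_def)

lemma total_dom_set_vertices:
  "no_isolated V E \<Longrightarrow> is_total_dom_set V E V"
  unfolding no_isolated_def is_total_dom_set_def nbhd_def by auto

lemma double_total_dom_set_vertices:
  assumes "finite V" and "2 \<le> min_degree V E"
  shows "is_double_total_dom_set V E V"
  unfolding is_double_total_dom_set_def
proof (intro conjI ballI subset_refl)
  fix v assume "v \<in> V"
  then have "min_degree V E \<le> degree V E v"
    unfolding min_degree_def using assms(1) by simp
  moreover have "nbhd V E v \<inter> V = nbhd V E v" unfolding nbhd_def by blast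
  ultimately show "2 \<le> card (nbhd V E v \<inter> V)" using assms(2) unfolding degree_def by simp
qed

lemma gamma_t_attained:
  assumes "finite V" and "is_total_dom_set V E S"
  shows "\<exists>T. is_total_dom_set V E T \<and> gamma_t V E = card T"
  unfolding gamma_t_def
  using assms by (intro Min_Collect_nat_attained[where B = "card V"])
    (auto simp: is_total_dom_set_def card_mono)

lemma gamma_x2t_attained:
  assumes "finite V" and "is_double_total_dom_set V E S"
  shows "\<exists>T. is_double_total_dom_set V E T \<and> gamma_x2t V E = card T"
  unfolding gamma_x2t_def
  using assms by (intro Min_Collect_nat_attained[where B = "card V"])
    (auto simp: is_double_total_dom_set_def card_mono)

lemma gamma_222_ge_ceiling:
  assumes "simple_graph V E" and "V \<noteq> {}" and "no_isolated V E"
  shows "\<lceil>2 * real (card V) / real (max_degree V E)\<rceil> \<le> int (gamma_222 V E)"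
proof -
  have fin: "finite V" using assms(1) unfolding simple_graph_def by simp
  obtain f where f: "is_222_function V E f" and w: "gamma_222 V E = (\<Sum>v\<in>V. f v)"
    using gamma_222_attained[OF is_222_function_total_dom_set[OF fin]]
      total_dom_set_vertices[OF assms(3)] by blast
  have "2 * card V \<le> gamma_222 V E * max_degree V E"
    unfolding w using assms(1) f by (rule card_le_weight_max_degree)
  then have "\<lceil>real (2 * card V) / real (max_degree V E)\<rceil> \<le> int (gamma_222 V E)"
    using max_degree_pos[OF fin assms(2,3)] by (rule ceiling_divide_le_nat)
  then show ?thesis by simp
qed

lemma gamma_222_le_twice_gamma_t:
  assumes "finite V" and "no_isolated V E"
  shows "gamma_222 V E \<le> 2 * gamma_t V E"
proof -
  obtain S where S: "is_total_dom_set V E S" and t: "gamma_t V E = card S"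
    using gamma_t_attained[OF assms(1) total_dom_set_vertices[OF assms(2)]] by blast
  show ?thesis
    unfolding t using assms(1) S is_222_function_total_dom_set[OF assms(1) S]
    by (intro gamma_222_le_indicator_weight) (auto simp: is_total_dom_set_def)
qed

lemma gamma_222_le_gamma_x2t:
  assumes "finite V" and "2 \<le> min_degree V E"
  shows "gamma_222 V E \<le> gamma_x2t V E"
proof -
  obtain T where T: "is_double_total_dom_set V E T" and x: "gamma_x2t V E = card T"
    using gamma_x2t_attained[OF assms(1) double_total_dom_set_vertices[OF assms]] by blast
  show ?thesis
    using gamma_222_le_indicator_weight[of V T E 1] assms(1) T
      is_222_function_double_total_dom_set[OF assms(1) T]
    unfolding x is_double_total_dom_set_def by simp
qed

theorem theorem15:
  fixes V :: "'a set" and E :: "'a \<Rightarrow> 'a \<Rightarrow> bool"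
  assumes "simple_graph V E" and "V \<noteq> {}" and "no_isolated V E"
  shows "\<lceil>2 * real (card V) / real (max_degree V E)\<rceil> \<le> int (gamma_222 V E)
         \<and> gamma_222 V E \<le> 2 * gamma_t V E
         \<and> (min_degree V E \<ge> 2 \<longrightarrow> gamma_222 V E \<le> gamma_x2t V E)"
proof -
  have "finite V" using assms(1) unfolding simple_graph_def by simp
  then show ?thesis
    using gamma_222_ge_ceiling[OF assms] gamma_222_le_twice_gamma_t[OF _ assms(3)]
      gamma_222_le_gamma_x2t by blast
qed

end
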